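(* In Model A below, let $I:=-\inf_{t\in\mathbb{R}}\log\big(\varrho(1-\varrho)e^{t}+\tfrac12+\tfrac12(1-2\varrho+2\varrho^2)e^{-t}\big)$. Then $I>0$ and $$\lim_{d\to\infty,\ d\text{ odd}}\frac1d\log\mathbb{P}\big(\chi(w)=2\text{ under the $c$-segmentation rule with }c=1\big)=-I,$$ while for every sequence $c=c(d)$ with $c\mid d$, $c$ and $d/c$ odd, $c\to\infty$ and $c/d\to0$, $$\lim_{d\to\infty}\frac1d\log\mathbb{P}\big(\chi(w)=2\text{ under the $c$-segmentation rule}\big)=-\tfrac{I}{2}.$$
   Context: Segmentation rule. Let $d,c$ be positive integers with $c\mid d$. For $x\in\mathbb{R}^d$ and $1\le j\le c$ let $x_j\in\mathbb{R}^{d/c}$ denote its $j$-th block $(x_{(j-1)d/c+1},\dots,x_{jd/c})$, so that $x=x_1\circ\cdots\circ x_c$ (concatenation). Given dictionary words $w^1,\dots,w^K\in\mathbb{R}^d$ ($w^k$ representing class $k$) and a test word $w\in\mathbb{R}^d$, for each $j$ let $U_j\in\{1,\dots,K\}$ be an index $k$ minimizing the Euclidean distance $\|w_j-w^k_j\|$ in $\mathbb{R}^{d/c}$, chosen uniformly at random among all minimizers (independently of everything else). The $c$-segmentation rule assigns to $w$ the class $\chi(w)\in\operatorname{argmax}_k\#\{j:U_j=k\}$, chosen uniformly at random among all maximizers. The case $c=1$ is the Euclidean (nearest-neighbour) rule and $c=d$ is coordinate-by-coordinate comparison. Probabilities are over all random objects including tie-breaks. Model A. Fix $\varrho\in(0,\tfrac12)$.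 Let $m_1,m_2$ be independent and uniformly distributed on $\{-1,+1\}^d$. Let $Y^{(0)},Y^{(1)},Y^{(2)}$ be independent random vectors in $\{-1,+1\}^d$, independent of $m_1,m_2$, each with i.i.d. coordinates satisfying $\mathbb{P}(Y_i=1)=1-\varrho$, $\mathbb{P}(Y_i=-1)=\varrho$. Write $x\times y$ for the coordinatewise product. There are $K=2$ classes; the dictionary words are $w^1=Y^{(1)}\times m_1$ (class 1) and $w^2=Y^{(2)}\times m_2$ (class 2), and the test word is $w=Y^{(0)}\times m_1$ (true class 1). *)

theory Defs
  imports "HOL-Probability.Probability"
begin

text \<open>Words in R^d are represented as functions nat => real, coordinates 0..d-1.
  Block j (1 <= j <= c) consists of the coordinates (j-1)*(d div c) ..< j*(d div c).\<close>

type_synonym word = "nat \<Rightarrow> real"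

definition block_dist :: "nat \<Rightarrow> nat \<Rightarrow> word \<Rightarrow> word \<Rightarrow> nat \<Rightarrow> real" where
  "block_dist d c x y j =
     sqrt (\<Sum>i\<in>{(j - 1) * (d div c) ..< j * (d div c)}. (x i - y i)^2)"

text \<open>Classes are 1..K; the dictionary W maps class k to the word w^k.
  Set of nearest classes for block j.\<close>
definition block_argmin :: "nat \<Rightarrow> nat \<Rightarrow> nat \<Rightarrow> (nat \<Rightarrow> word) \<Rightarrow> word \<Rightarrow> nat \<Rightarrow> nat set" where
  "block_argmin d c K W w j =
     {k\<in>{1..K}. \<forall>k'\<in>{1..K}. block_dist d c w (W k) j \<le> block_dist d c w (W k') j}"

definition vote_count :: "nat \<Rightarrow> (nat \<Rightarrow> nat) \<Rightarrow> nat \<Rightarrow> nat" where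
  "vote_count c U k = card {j\<in>{1..c}. U j = k}"

definition vote_argmax :: "nat \<Rightarrow> nat \<Rightarrow> (nat \<Rightarrow> nat) \<Rightarrow> nat set" where
  "vote_argmax c K U = {k\<in>{1..K}. \<forall>k'\<in>{1..K}. vote_count c U k' \<le> vote_count c U k}"

text \<open>The c-segmentation rule: distribution of the assigned class chi(w), including the
  independent uniform tie-breaks.\<close>
definition seg_rule :: "nat \<Rightarrow> nat \<Rightarrow> nat \<Rightarrow> (nat \<Rightarrow> word) \<Rightarrow> word \<Rightarrow> nat pmf" where
  "seg_rule d c K W w =
     do { U \<leftarrow> Pi_pmf {1..c} 0 (\<lambda>j. pmf_of_set (block_argmin d c K W w j));
          pmf_of_set (vote_argmax c K U) }"

definition unif_sign_vec :: "nat \<Rightarrow> word pmf" where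
  "unif_sign_vec d = Pi_pmf {..<d} 0 (\<lambda>_. pmf_of_set {-1, 1})"

definition noise_vec :: "real \<Rightarrow> nat \<Rightarrow> word pmf" where
  "noise_vec \<rho> d = Pi_pmf {..<d} 0
     (\<lambda>_. map_pmf (\<lambda>b. if b then 1 else -1) (bernoulli_pmf (1 - \<rho>)))"

definition coord_prod :: "word \<Rightarrow> word \<Rightarrow> word" where
  "coord_prod x y = (\<lambda>i. x i * y i)"

definition modelA_err :: "real \<Rightarrow> nat \<Rightarrow> nat \<Rightarrow> real" where
  "modelA_err \<rho> d c = pmf
     (do { m1 \<leftarrow> unif_sign_vec d;
           m2 \<leftarrow> unif_sign_vec d;
           Y0 \<leftarrow> noise_vec \<rho> d;
           Y1 \<leftarrow> noise_vec \<rho> d;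
           Y2 \<leftarrow> noise_vec \<rho> d;
           seg_rule d c 2
             (\<lambda>k. if k = 1 then coord_prod Y1 m1 else coord_prod Y2 m2)
             (coord_prod Y0 m1) }) 2"

definition rate_I :: "real \<Rightarrow> real" where
  "rate_I \<rho> = - (INF t::real. ln (\<rho> * (1 - \<rho>) * exp t + 1/2
                        + 1/2 * (1 - 2*\<rho> + 2*\<rho>^2) * exp (-t)))"

end

theory Submission
  imports Defs "HOL-Real_Asymp.Real_Asymp"
begin

(* Coordinate i of the test word differs from w^1 iff Y0_i ~= Y1_i, which has probability
  p = 2 rho (1 - rho); it differs from w^2 with probability 1/2, independently, because the mask
  m2 is uniform. On +-1 words the block distance is increasing in the number of differing
  coordinates, so a block of length L votes for class 2 with probability
  q_L = P(N1 > N2) + P(N1 = N2)/2, where N1 ~ Bin(L, p) and N2 ~ Bin(L, 1/2) are independent.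
  A Chernoff bound, and the diagonal N1 = N2 together with Cauchy-Schwarz, give
  r^L / (2 (L + 1)) <= q_L <= r^L for r = 1/2 + sqrt (p (1 - p)), and AM-GM identifies r with
  exp (-I). With c blocks (c odd) the error is P(Bin(c, q_L) > c/2), which lies between
  q_L^((c+1)/2) (1 - q_L)^((c-1)/2) and 2^c q_L^((c+1)/2). Its exponent per coordinate is
  therefore (1 + 1/c)/2 * ln r: this is -I for c = 1, and tends to -I/2 when c -> oo and L -> oo. *)

section \<open>Law of the mismatch indicators\<close>

lemma mismatch_prob_le_half: "2 * \<rho> * (1 - \<rho>) \<le> (1/2 :: real)"
  using zero_le_power2[of "1 - 2 * \<rho>"] by (simp add: power2_eq_square algebra_simps)

lemma mismatch_prob_less_half: "\<rho> \<noteq> 1/2 \<Longrightarrow> 2 * \<rho> * (1 - \<rho>) < (1/2 :: real)"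
  using zero_less_power2[of "1 - 2 * \<rho>"] by (simp add: power2_eq_square algebra_simps)

definition noisy_sign :: "real \<Rightarrow> real pmf" where
  "noisy_sign \<rho> = map_pmf (\<lambda>b. if b then 1 else -1) (bernoulli_pmf (1 - \<rho>))"

lemma set_pmf_noisy_sign: "set_pmf (noisy_sign \<rho>) \<subseteq> {-1, 1}"
  unfolding noisy_sign_def by auto

lemma uniform_sign_mismatch:
  fixes u v :: real
  assumes "u \<in> {-1, 1}" "v \<in> {-1, 1}"
  shows "map_pmf (\<lambda>b. u \<noteq> v * b) (pmf_of_set {-1, 1}) = bernoulli_pmf (1/2)"
proof -
  have "inj_on (\<lambda>b. u \<noteq> v * b) {-1, 1}" and "(\<lambda>b. u \<noteq> v * b) ` {-1, 1} = UNIV"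
    using assms by (auto simp: inj_on_def)
  then show ?thesis
    by (simp add: map_pmf_of_set_inj bernoulli_pmf_half_conv_pmf_of_set)
qed

lemma noisy_signs_differ:
  assumes "0 \<le> \<rho>" "\<rho> \<le> 1"
  shows "do {s \<leftarrow> noisy_sign \<rho>; t \<leftarrow> noisy_sign \<rho>; return_pmf (s \<noteq> t)}
           = bernoulli_pmf (2 * \<rho> * (1 - \<rho>))"
proof (rule pmf_eqI)
  fix x :: bool
  have "2 * \<rho> * (1 - \<rho>) \<le> 1"
    using mismatch_prob_le_half[of \<rho>] by simp
  then show "pmf (do {s \<leftarrow> noisy_sign \<rho>; t \<leftarrow> noisy_sign \<rho>; return_pmf (s \<noteq> t)}) x
             = pmf (bernoulli_pmf (2 * \<rho> * (1 - \<rho>))) x"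
    using assms
    by (cases x; simp add: noisy_sign_def bind_map_pmf pmf_bind; simp add: algebra_simps)
qed

definition coordinate_pmf :: "real \<Rightarrow> (real \<times> real \<times> real \<times> real \<times> real) pmf" where
  "coordinate_pmf \<rho> =
     do {m1 \<leftarrow> pmf_of_set {-1, 1}; m2 \<leftarrow> pmf_of_set {-1, 1};
         y0 \<leftarrow> noisy_sign \<rho>; y1 \<leftarrow> noisy_sign \<rho>; y2 \<leftarrow> noisy_sign \<rho>;
         return_pmf (m1, m2, y0, y1, y2)}"

definition mismatches :: "real \<times> real \<times> real \<times> real \<times> real \<Rightarrow> bool \<times> bool" where
  "mismatches = (\<lambda>(m1, m2, y0, y1, y2). (y0 \<noteq> y1, y0 * m1 \<noteq> y2 * m2))"

definition mismatch_pmf :: "real \<Rightarrow> (bool \<times> bool) pmf" where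
  "mismatch_pmf p = pair_pmf (bernoulli_pmf p) (bernoulli_pmf (1/2))"

lemma map_mismatches_coordinate_pmf:
  assumes "0 \<le> \<rho>" "\<rho> \<le> 1"
  shows "map_pmf mismatches (coordinate_pmf \<rho>) = mismatch_pmf (2 * \<rho> * (1 - \<rho>))"
proof -
  let ?S = "pmf_of_set {-1, 1 :: real}" and ?N = "noisy_sign \<rho>"
  have "map_pmf mismatches (coordinate_pmf \<rho>)
      = do {m1 \<leftarrow> ?S; m2 \<leftarrow> ?S; y0 \<leftarrow> ?N; y1 \<leftarrow> ?N; y2 \<leftarrow> ?N;
            return_pmf (y0 \<noteq> y1, y0 * m1 \<noteq> y2 * m2)}"
    by (simp add: coordinate_pmf_def mismatches_def map_bind_pmf)
  also have "\<dots> = do {y0 \<leftarrow> ?N; y1 \<leftarrow> ?N; y2 \<leftarrow> ?N; m1 \<leftarrow> ?S; m2 \<leftarrow> ?S;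
            return_pmf (y0 \<noteq> y1, y0 * m1 \<noteq> y2 * m2)}"
    by (simp add: bind_commute_pmf[of ?S ?N])
  txt \<open>Whatever the other signs are, the uniform mask \<open>m2\<close> turns the second indicator into a fair coin.\<close>
  also have "\<dots> = do {y0 \<leftarrow> ?N; y1 \<leftarrow> ?N; y2 \<leftarrow> ?N; m1 \<leftarrow> ?S;
            map_pmf (Pair (y0 \<noteq> y1)) (bernoulli_pmf (1/2))}"
  proof (intro bind_pmf_cong refl)
    fix y0 y1 y2 m1
    assume "y0 \<in> set_pmf ?N" "y2 \<in> set_pmf ?N" "m1 \<in> set_pmf ?S"
    then have "map_pmf (\<lambda>m2. y0 * m1 \<noteq> y2 * m2) ?S = bernoulli_pmf (1/2)"
      using set_pmf_noisy_sign[of \<rho>] by (intro uniform_sign_mismatch) auto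
    then have "map_pmf (Pair (y0 \<noteq> y1) \<circ> (\<lambda>m2. y0 * m1 \<noteq> y2 * m2)) ?S
                 = map_pmf (Pair (y0 \<noteq> y1)) (bernoulli_pmf (1/2))"
      by (simp flip: pmf.map_comp)
    then show "do {m2 \<leftarrow> ?S; return_pmf (y0 \<noteq> y1, y0 * m1 \<noteq> y2 * m2)}
             = map_pmf (Pair (y0 \<noteq> y1)) (bernoulli_pmf (1/2))"
      by (simp add: map_pmf_def o_def)
  qed
  also have "\<dots> = do {b \<leftarrow> do {y0 \<leftarrow> ?N; y1 \<leftarrow> ?N; return_pmf (y0 \<noteq> y1)};
                      map_pmf (Pair b) (bernoulli_pmf (1/2))}"
    by (simp add: bind_pmf_const bind_assoc_pmf bind_return_pmf)
  also have "\<dots> = mismatch_pmf (2 * \<rho> * (1 - \<rho>))"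
    by (simp only: noisy_signs_differ[OF assms] mismatch_pmf_def pair_pmf_def map_pmf_def)
  finally show ?thesis .
qed

section \<open>Reduction to a majority of independent block votes\<close>

definition block :: "nat \<Rightarrow> nat \<Rightarrow> nat \<Rightarrow> nat set" where
  "block d c j = {(j - 1) * (d div c) ..< j * (d div c)}"

lemma block_subset_lessThan:
  assumes "c dvd d" "j \<le> c"
  shows "block d c j \<subseteq> {..<d}"
proof
  fix i assume "i \<in> block d c j"
  then have "i < j * (d div c)" by (simp add: block_def)
  also have "\<dots> \<le> c * (d div c)" using \<open>j \<le> c\<close> by simp
  finally show "i \<in> {..<d}" using \<open>c dvd d\<close> by simp
qed

lemma block_dist_signs:
  assumes "\<And>i. i \<in> block d c j \<Longrightarrow> x i \<in> {-1, 1} \<and> y i \<in> {-1, 1}"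
  shows "block_dist d c x y j = 2 * sqrt (card {i \<in> block d c j. x i \<noteq> y i})"
proof -
  have "(\<Sum>i\<in>block d c j. (x i - y i)^2) = (\<Sum>i\<in>block d c j. if x i \<noteq> y i then 4 else 0)"
  proof (rule sum.cong[OF refl])
    fix i assume "i \<in> block d c j"
    then show "(x i - y i)^2 = (if x i \<noteq> y i then 4 else 0)"
      using assms[of i] by auto
  qed
  also have "\<dots> = 4 * card {i \<in> block d c j. x i \<noteq> y i}"
    by (simp add: sum.inter_filter[symmetric] block_def)
  finally show ?thesis
    unfolding block_dist_def block_def[symmetric] by (simp add: real_sqrt_mult)
qed

definition nearest_classes :: "'a::linorder \<Rightarrow> 'a \<Rightarrow> nat set" where
  "nearest_classes a b = (if a < b then {1} else if b < a then {2} else {1, 2})"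

lemma block_argmin_two_classes:
  "block_argmin d c 2 W w j = nearest_classes (block_dist d c w (W 1) j) (block_dist d c w (W 2) j)"
proof -
  have "{1..2::nat} = {1, 2}" by auto
  then show ?thesis by (auto simp: block_argmin_def nearest_classes_def)
qed

definition block_vote :: "nat set \<Rightarrow> (nat \<Rightarrow> bool \<times> bool) \<Rightarrow> nat pmf" where
  "block_vote B \<delta> = pmf_of_set (nearest_classes (card {i \<in> B. fst (\<delta> i)}) (card {i \<in> B. snd (\<delta> i)}))"

definition seg_vote :: "nat \<Rightarrow> nat \<Rightarrow> (nat \<Rightarrow> bool \<times> bool) \<Rightarrow> nat pmf" where
  "seg_vote d c \<delta> =
     Pi_pmf {1..c} 0 (\<lambda>j. block_vote (block d c j) \<delta>) \<bind> (\<lambda>U. pmf_of_set (vote_argmax c 2 U))"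

lemma seg_rule_sign_words:
  fixes m1 m2 y0 y1 y2 :: word
  assumes "c dvd d"
    and signs: "\<And>i. i < d \<Longrightarrow> m1 i \<in> {-1, 1} \<and> m2 i \<in> {-1, 1} \<and>
                               y0 i \<in> {-1, 1} \<and> y1 i \<in> {-1, 1} \<and> y2 i \<in> {-1, 1}"
    and \<delta>: "\<And>i. i < d \<Longrightarrow> \<delta> i = (y0 i \<noteq> y1 i, y0 i * m1 i \<noteq> y2 i * m2 i)"
  shows "seg_rule d c 2 (\<lambda>k. if k = 1 then coord_prod y1 m1 else coord_prod y2 m2) (coord_prod y0 m1)
           = seg_vote d c \<delta>"
  unfolding seg_rule_def seg_vote_def block_vote_def
proof (intro bind_pmf_cong refl Pi_pmf_cong arg_cong[where f = pmf_of_set])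
  fix j assume "j \<in> {1..c}"
  then have block: "block d c j \<subseteq> {..<d}"
    using \<open>c dvd d\<close> by (intro block_subset_lessThan) auto
  have block_signs: "m1 i \<in> {-1, 1}" "m2 i \<in> {-1, 1}" "y0 i \<in> {-1, 1}" "y1 i \<in> {-1, 1}" "y2 i \<in> {-1, 1}"
    and block_\<delta>: "\<delta> i = (y0 i \<noteq> y1 i, y0 i * m1 i \<noteq> y2 i * m2 i)"
    if "i \<in> block d c j" for i
    using signs[of i] \<delta>[of i] block that by auto
  let ?W = "\<lambda>k::nat. if k = 1 then coord_prod y1 m1 else coord_prod y2 m2"
  have dist: "block_dist d c (coord_prod y0 m1) w j
          = 2 * sqrt (card {i \<in> block d c j. coord_prod y0 m1 i \<noteq> w i})"
    if "w = coord_prod y1 m1 \<or> w = coord_prod y2 m2" for w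
  proof (rule block_dist_signs)
    fix i assume "i \<in> block d c j"
    from block_signs[OF this] show "coord_prod y0 m1 i \<in> {-1, 1} \<and> w i \<in> {-1, 1}"
      using that by (auto simp: coord_prod_def)
  qed
  have "coord_prod y0 m1 i \<noteq> coord_prod y1 m1 i \<longleftrightarrow> fst (\<delta> i)"
    and "coord_prod y0 m1 i \<noteq> coord_prod y2 m2 i \<longleftrightarrow> snd (\<delta> i)" if "i \<in> block d c j" for i
    using block_signs[OF that] block_\<delta>[OF that] by (auto simp: coord_prod_def)
  then have "{i \<in> block d c j. coord_prod y0 m1 i \<noteq> coord_prod y1 m1 i} = {i \<in> block d c j. fst (\<delta> i)}"
    and "{i \<in> block d c j. coord_prod y0 m1 i \<noteq> coord_prod y2 m2 i} = {i \<in> block d c j. snd (\<delta> i)}"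
    by blast+
  then show "block_argmin d c 2 ?W (coord_prod y0 m1) j =
      nearest_classes (card {i \<in> block d c j. fst (\<delta> i)}) (card {i \<in> block d c j. snd (\<delta> i)})"
    unfolding block_argmin_two_classes by (simp add: dist nearest_classes_def)
qed

lemma Pi_pmf_coordinate_pmf:
  assumes "finite A"
  shows "Pi_pmf A dflt (\<lambda>_. coordinate_pmf \<rho>) =
    do {m1 \<leftarrow> Pi_pmf A 0 (\<lambda>_. pmf_of_set {-1, 1}); m2 \<leftarrow> Pi_pmf A 0 (\<lambda>_. pmf_of_set {-1, 1});
        y0 \<leftarrow> Pi_pmf A 0 (\<lambda>_. noisy_sign \<rho>); y1 \<leftarrow> Pi_pmf A 0 (\<lambda>_. noisy_sign \<rho>);
        y2 \<leftarrow> Pi_pmf A 0 (\<lambda>_. noisy_sign \<rho>);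
        return_pmf (\<lambda>i. if i \<in> A then (m1 i, m2 i, y0 i, y1 i, y2 i) else dflt)}"
  unfolding coordinate_pmf_def using assms by (simp add: Pi_pmf_bind[where d' = "0::real"])

lemma modelA_err_mismatch_vector:
  assumes "c dvd d" "0 \<le> \<rho>" "\<rho> \<le> 1"
  shows "modelA_err \<rho> d c
           = pmf (Pi_pmf {..<d} (False, False) (\<lambda>_. mismatch_pmf (2 * \<rho> * (1 - \<rho>))) \<bind> seg_vote d c) 2"
proof -
  \<comment> \<open>chosen so that \<open>mismatches dflt = (False, False)\<close>\<close>
  define dflt :: "real \<times> real \<times> real \<times> real \<times> real" where "dflt = (1, 1, 1, 1, 1)"
  let ?S = "Pi_pmf {..<d} 0 (\<lambda>_. pmf_of_set {-1, 1 :: real})"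
    and ?N = "Pi_pmf {..<d} 0 (\<lambda>_. noisy_sign \<rho>)"
  have "modelA_err \<rho> d c = pmf (do {m1 \<leftarrow> ?S; m2 \<leftarrow> ?S; y0 \<leftarrow> ?N; y1 \<leftarrow> ?N; y2 \<leftarrow> ?N;
      seg_vote d c (\<lambda>i. mismatches (if i \<in> {..<d} then (m1 i, m2 i, y0 i, y1 i, y2 i) else dflt))}) 2"
    unfolding modelA_err_def unif_sign_vec_def noise_vec_def noisy_sign_def[symmetric]
  proof (intro arg_cong2[where f = pmf] refl bind_pmf_cong seg_rule_sign_words assms(1))
    fix m1 m2 y0 y1 y2 i
    assume "m1 \<in> set_pmf ?S" "m2 \<in> set_pmf ?S" "y0 \<in> set_pmf ?N" "y1 \<in> set_pmf ?N" "y2 \<in> set_pmf ?N"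
      and "i < d"
    then show "m1 i \<in> {-1, 1} \<and> m2 i \<in> {-1, 1} \<and> y0 i \<in> {-1, 1} \<and> y1 i \<in> {-1, 1} \<and> y2 i \<in> {-1, 1}"
      using set_pmf_noisy_sign[of \<rho>] by (auto simp: set_Pi_pmf PiE_dflt_def)
  qed (simp add: mismatches_def)
  also have "\<dots> = pmf (map_pmf (\<lambda>t. mismatches \<circ> t) (Pi_pmf {..<d} dflt (\<lambda>_. coordinate_pmf \<rho>))
                       \<bind> seg_vote d c) 2"
    by (simp add: Pi_pmf_coordinate_pmf bind_map_pmf bind_assoc_pmf bind_return_pmf o_def)
  also have "map_pmf (\<lambda>t. mismatches \<circ> t) (Pi_pmf {..<d} dflt (\<lambda>_. coordinate_pmf \<rho>))
               = Pi_pmf {..<d} (False, False) (\<lambda>_. map_pmf mismatches (coordinate_pmf \<rho>))"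
    by (rule Pi_pmf_map[symmetric]) (auto simp: dflt_def mismatches_def)
  finally show ?thesis
    using assms by (simp add: map_mismatches_coordinate_pmf)
qed

lemma Pi_pmf_curry:
  assumes A: "finite A" and B: "finite B"
  shows "map_pmf curry (Pi_pmf (A \<times> B) dflt (\<lambda>(a, b). P a b))
           = Pi_pmf A (\<lambda>_. dflt) (\<lambda>a. Pi_pmf B dflt (P a))"
proof (rule pmf_eqI)
  fix G :: "'a \<Rightarrow> 'b \<Rightarrow> 'c"
  have "pmf (map_pmf curry (Pi_pmf (A \<times> B) dflt (\<lambda>(a, b). P a b))) G
          = pmf (Pi_pmf (A \<times> B) dflt (\<lambda>(a, b). P a b)) (case_prod G)"
    by (metis curry_case_prod inj_on_def pmf_map_inj' case_prod_curry)
  also have "\<dots> = pmf (Pi_pmf A (\<lambda>_. dflt) (\<lambda>a. Pi_pmf B dflt (P a))) G"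
  proof (cases "\<forall>a b. (a, b) \<notin> A \<times> B \<longrightarrow> G a b = dflt")
    case True
    have "pmf (Pi_pmf (A \<times> B) dflt (\<lambda>(a, b). P a b)) (case_prod G)
            = (\<Prod>(a, b)\<in>A \<times> B. pmf (P a b) (G a b))"
      using True A B by (subst pmf_Pi) (auto simp: case_prod_unfold)
    also have "\<dots> = (\<Prod>a\<in>A. \<Prod>b\<in>B. pmf (P a b) (G a b))"
      by (rule prod.cartesian_product[symmetric])
    also have "\<dots> = (\<Prod>a\<in>A. pmf (Pi_pmf B dflt (P a)) (G a))"
      using True B by (intro prod.cong refl) (subst pmf_Pi, auto)
    also have "\<dots> = pmf (Pi_pmf A (\<lambda>_. dflt) (\<lambda>a. Pi_pmf B dflt (P a))) G"
      using True A by (subst pmf_Pi) (auto simp: fun_eq_iff)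
    finally show ?thesis .
  next
    case False
    then obtain a b where ab: "(a, b) \<notin> A \<times> B" "G a b \<noteq> dflt" by auto
    have "pmf (Pi_pmf A (\<lambda>_. dflt) (\<lambda>a. Pi_pmf B dflt (P a))) G = 0"
    proof (cases "a \<in> A")
      case True
      then have "pmf (Pi_pmf B dflt (P a)) (G a) = 0"
        using ab B by (intro pmf_Pi_outside) auto
      then show ?thesis using True A by (subst pmf_Pi) (auto intro: prod_zero)
    next
      case False
      then show ?thesis using ab A by (intro pmf_Pi_outside) auto
    qed
    moreover have "pmf (Pi_pmf (A \<times> B) dflt (\<lambda>(a, b). P a b)) (case_prod G) = 0"
      using ab A B by (intro pmf_Pi_outside) auto
    ultimately show ?thesis by simp
  qed
  finally show "pmf (map_pmf curry (Pi_pmf (A \<times> B) dflt (\<lambda>(a, b). P a b))) G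
                  = pmf (Pi_pmf A (\<lambda>_. dflt) (\<lambda>a. Pi_pmf B dflt (P a))) G" .
qed

lemma bij_betw_block_coordinates:
  fixes L :: nat
  assumes "0 < L"
  shows "bij_betw (\<lambda>i. (i div L + 1, i mod L)) {..<c * L} ({1..c} \<times> {..<L})"
proof (rule bij_betwI[where g = "\<lambda>(j, k). (j - 1) * L + k"])
  show "(\<lambda>i. (i div L + 1, i mod L)) \<in> {..<c * L} \<rightarrow> {1..c} \<times> {..<L}"
    using assms by (auto simp: less_mult_imp_div_less Suc_leI)
  show "(\<lambda>(j, k). (j - 1) * L + k) \<in> {1..c} \<times> {..<L} \<rightarrow> {..<c * L}"
  proof
    fix x assume "x \<in> {1..c} \<times> {..<L}"
    then obtain j k where x: "x = (j, k)" "1 \<le> j" "j \<le> c" "k < L" by auto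
    then have "(j - 1) * L + k < (j - 1) * L + L" by simp
    also have "\<dots> = j * L" using \<open>1 \<le> j\<close> by (cases j) auto
    also have "\<dots> \<le> c * L" using \<open>j \<le> c\<close> by simp
    finally show "(\<lambda>(j, k). (j - 1) * L + k) x \<in> {..<c * L}" using x by simp
  qed
qed auto

lemma card_block_filter:
  assumes "1 \<le> j"
  shows "card {i \<in> block d c j. P (i div (d div c) + 1, i mod (d div c))}
           = card {k \<in> {..<d div c}. P (j, k)}"
proof -
  let ?L = "d div c" and ?f = "\<lambda>k. (j - 1) * (d div c) + k"
  have "j * ?L = (j - 1) * ?L + ?L" using assms by (cases j) auto
  then have "block d c j = ?f ` {..<?L}"
    by (simp add: block_def lessThan_atLeast0 add.commute)
  moreover have "?f k div ?L + 1 = j" "?f k mod ?L = k" if "k < ?L" for k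
    using assms that by simp_all
  ultimately have "{i \<in> block d c j. P (i div ?L + 1, i mod ?L)} = ?f ` {k \<in> {..<?L}. P (j, k)}"
    by auto
  then show ?thesis by (simp add: card_image)
qed

lemma seg_vote_blockwise:
  assumes "c dvd d" "0 < d"
  shows "Pi_pmf {..<d} dflt (\<lambda>_. D) \<bind> seg_vote d c
           = Pi_pmf {1..c} 0 (\<lambda>_. Pi_pmf {..<d div c} dflt (\<lambda>_. D) \<bind> block_vote {..<d div c})
               \<bind> (\<lambda>U. pmf_of_set (vote_argmax c 2 U))"
proof -
  define L where "L = d div c"
  have d: "d = c * L" using assms by (simp add: L_def)
  then have "0 < L" using assms by (cases L) auto
  define h where "h = (\<lambda>i. (i div L + 1, i mod L))"
  define vote where "vote = (\<lambda>U. pmf_of_set (vote_argmax c 2 U))"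
  have "h i \<notin> {1..c} \<times> {..<L}" if "i \<notin> {..<d}" for i
  proof -
    have "c * L \<le> i" using that d by simp
    then have "c * L div L \<le> i div L" by (rule div_le_mono)
    then show ?thesis using \<open>0 < L\<close> by (simp add: h_def)
  qed
  then have "Pi_pmf {..<d} dflt (\<lambda>_. D) = map_pmf (\<lambda>g. g \<circ> h) (Pi_pmf ({1..c} \<times> {..<L}) dflt (\<lambda>_. D))"
    using bij_betw_block_coordinates[OF \<open>0 < L\<close>, of c] d by (intro Pi_pmf_bij_betw) (auto simp: h_def)
  moreover have "seg_vote d c (g \<circ> h) = Pi_pmf {1..c} 0 (\<lambda>j. block_vote {..<L} (curry g j)) \<bind> vote" for g
    unfolding seg_vote_def vote_def
  proof (intro bind_pmf_cong refl Pi_pmf_cong)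
    fix j :: nat assume "j \<in> {1..c}"
    then show "block_vote (block d c j) (g \<circ> h) = block_vote {..<L} (curry g j)"
      using card_block_filter[of j d c "\<lambda>x. fst (g x)"] card_block_filter[of j d c "\<lambda>x. snd (g x)"]
      by (simp add: block_vote_def h_def L_def)
  qed
  ultimately have "Pi_pmf {..<d} dflt (\<lambda>_. D) \<bind> seg_vote d c
      = map_pmf curry (Pi_pmf ({1..c} \<times> {..<L}) dflt (\<lambda>(_, _). D))
          \<bind> (\<lambda>B. Pi_pmf {1..c} 0 (\<lambda>j. block_vote {..<L} (B j)) \<bind> vote)"
    by (simp add: bind_map_pmf o_def case_prod_unfold)
  also have "\<dots> = Pi_pmf {1..c} (\<lambda>_. dflt) (\<lambda>_. Pi_pmf {..<L} dflt (\<lambda>_. D))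
                    \<bind> (\<lambda>B. Pi_pmf {1..c} 0 (\<lambda>j. block_vote {..<L} (B j))) \<bind> vote"
    by (simp add: Pi_pmf_curry bind_assoc_pmf)
  also have "\<dots> = Pi_pmf {1..c} 0 (\<lambda>_. Pi_pmf {..<L} dflt (\<lambda>_. D) \<bind> block_vote {..<L}) \<bind> vote"
    by (simp add: Pi_pmf_bind[where d' = "\<lambda>_. dflt"])
  finally show ?thesis by (simp add: L_def vote_def)
qed

definition block_vote_pmf :: "real \<Rightarrow> nat \<Rightarrow> nat pmf" where
  "block_vote_pmf p L =
     do {n1 \<leftarrow> binomial_pmf L p; n2 \<leftarrow> binomial_pmf L (1/2); pmf_of_set (nearest_classes n1 n2)}"

lemma Pi_pmf_mismatch_block_vote:
  assumes "0 \<le> p" "p \<le> 1"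
  shows "Pi_pmf {..<L} (False, False) (\<lambda>_. mismatch_pmf p) \<bind> block_vote {..<L} = block_vote_pmf p L"
proof -
  have "Pi_pmf {..<L} (False, False) (\<lambda>_. mismatch_pmf p)
      = do {f \<leftarrow> Pi_pmf {..<L} False (\<lambda>_. bernoulli_pmf p); g \<leftarrow> Pi_pmf {..<L} False (\<lambda>_. bernoulli_pmf (1/2));
            return_pmf (\<lambda>i. if i \<in> {..<L} then (f i, g i) else (False, False))}"
    by (simp add: mismatch_pmf_def pair_pmf_def Pi_pmf_bind[where d' = False])
  moreover have "{i. (i < L \<longrightarrow> f i) \<and> i < L} = {i. i < L \<and> f i}" for f :: "nat \<Rightarrow> bool"
    by auto
  ultimately have "Pi_pmf {..<L} (False, False) (\<lambda>_. mismatch_pmf p) \<bind> block_vote {..<L}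
      = do {n1 \<leftarrow> map_pmf (\<lambda>f. card {i \<in> {..<L}. f i}) (Pi_pmf {..<L} False (\<lambda>_. bernoulli_pmf p));
            n2 \<leftarrow> map_pmf (\<lambda>f. card {i \<in> {..<L}. f i}) (Pi_pmf {..<L} False (\<lambda>_. bernoulli_pmf (1/2)));
            pmf_of_set (nearest_classes n1 n2)}"
    by (simp add: bind_map_pmf bind_assoc_pmf bind_return_pmf block_vote_def)
  also have "\<dots> = block_vote_pmf p L"
    using assms by (simp add: block_vote_pmf_def binomial_pmf_altdef'[where A = "{..<L}" and dflt = False])
  finally show ?thesis .
qed

lemma map_pmf_eq_bernoulli: "map_pmf (\<lambda>x. x = a) Q = bernoulli_pmf (pmf Q a)"
proof (rule pmf_eqI)
  fix b :: bool
  have "(\<lambda>x. x = a) -` {True} = {a}" and "(\<lambda>x. x = a) -` {False} = UNIV - {a}" by auto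
  then show "pmf (map_pmf (\<lambda>x. x = a) Q) b = pmf (bernoulli_pmf (pmf Q a)) b"
    using measure_pmf.prob_compl[of "{a}" Q]
    by (cases b) (simp_all add: pmf_map measure_pmf_single pmf_le_1)
qed

lemma vote_argmax_two_classes:
  assumes "odd c" "\<And>j. j \<in> {1..c} \<Longrightarrow> U j \<in> {1, 2}"
  shows "vote_argmax c 2 U = {if c < 2 * card {j \<in> {1..c}. U j = 2} then 2 else 1}"
proof -
  have "vote_count c U 1 + vote_count c U 2
          = card ({j \<in> {1..c}. U j = 1} \<union> {j \<in> {1..c}. U j = 2})"
    unfolding vote_count_def by (rule card_Un_disjoint[symmetric]) auto
  also have "{j \<in> {1..c}. U j = 1} \<union> {j \<in> {1..c}. U j = 2} = {1..c}"
    using assms(2) by fastforce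
  finally have "vote_count c U 1 + vote_count c U 2 = c" by simp
  moreover have "2 * vote_count c U 2 \<noteq> c" using assms(1) by (metis dvd_triv_left)
  moreover have "{1..2::nat} = {1, 2}" by auto
  ultimately show ?thesis
    by (auto simp: vote_argmax_def vote_count_def)
qed

lemma majority_vote_binomial:
  assumes "odd c" "set_pmf Q \<subseteq> {1, 2}"
  shows "pmf (Pi_pmf {1..c} 0 (\<lambda>_. Q) \<bind> (\<lambda>U. pmf_of_set (vote_argmax c 2 U))) 2
           = measure_pmf.prob (binomial_pmf c (pmf Q 2)) {k. c < 2 * k}"
proof -
  define winner where "winner = (\<lambda>k. if c < 2 * k then 2 else (1::nat))"
  have "Pi_pmf {1..c} 0 (\<lambda>_. Q) \<bind> (\<lambda>U. pmf_of_set (vote_argmax c 2 U))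
      = Pi_pmf {1..c} 0 (\<lambda>_. Q) \<bind> (\<lambda>U. return_pmf (winner (card {j \<in> {1..c}. U j = 2})))"
  proof (intro bind_pmf_cong refl)
    fix U assume "U \<in> set_pmf (Pi_pmf {1..c} 0 (\<lambda>_. Q))"
    then have "U j \<in> {1, 2}" if "j \<in> {1..c}" for j
      using that assms(2) by (auto simp: set_Pi_pmf PiE_dflt_def)
    then show "pmf_of_set (vote_argmax c 2 U) = return_pmf (winner (card {j \<in> {1..c}. U j = 2}))"
      using vote_argmax_two_classes[OF assms(1)] by (simp add: winner_def pmf_of_set_singleton)
  qed
  also have "\<dots> = map_pmf winner (map_pmf (\<lambda>f. card {j \<in> {1..c}. f j})
                      (map_pmf (\<lambda>U j. U j = 2) (Pi_pmf {1..c} 0 (\<lambda>_. Q))))"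
    by (simp add: map_pmf_def bind_assoc_pmf bind_return_pmf)
  also have "map_pmf (\<lambda>U j. U j = 2) (Pi_pmf {1..c} 0 (\<lambda>_. Q))
               = Pi_pmf {1..c} False (\<lambda>_. bernoulli_pmf (pmf Q 2))"
    using Pi_pmf_map[of "{1..c}" "\<lambda>x. x = 2" 0 False "\<lambda>_. Q"]
    by (simp add: o_def map_pmf_eq_bernoulli)
  also have "map_pmf (\<lambda>f. card {j \<in> {1..c}. f j}) \<dots> = binomial_pmf c (pmf Q 2)"
    by (rule binomial_pmf_altdef'[symmetric]) (auto simp: pmf_le_1)
  finally show ?thesis
    by (simp add: pmf_map winner_def vimage_def)
qed

lemma set_pmf_block_vote_pmf: "set_pmf (block_vote_pmf p L) \<subseteq> {1, 2}"
  by (auto simp: block_vote_pmf_def nearest_classes_def split: if_splits)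

lemma modelA_err_majority:
  assumes "c dvd d" "0 < d" "odd c" "0 \<le> \<rho>" "\<rho> \<le> 1"
  defines "p \<equiv> 2 * \<rho> * (1 - \<rho>)"
  shows "modelA_err \<rho> d c
           = measure_pmf.prob (binomial_pmf c (pmf (block_vote_pmf p (d div c)) 2)) {k. c < 2 * k}"
proof -
  have "0 \<le> p" "p \<le> 1"
    using assms(4,5) mismatch_prob_le_half[of \<rho>] by (simp_all add: p_def)
  then have "modelA_err \<rho> d c
      = pmf (Pi_pmf {1..c} 0 (\<lambda>_. block_vote_pmf p (d div c)) \<bind> (\<lambda>U. pmf_of_set (vote_argmax c 2 U))) 2"
    using assms(1-5) unfolding p_def
    by (simp add: modelA_err_mismatch_vector seg_vote_blockwise Pi_pmf_mismatch_block_vote)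
  also have "\<dots> = measure_pmf.prob (binomial_pmf c (pmf (block_vote_pmf p (d div c)) 2)) {k. c < 2 * k}"
    by (rule majority_vote_binomial[OF \<open>odd c\<close> set_pmf_block_vote_pmf])
  finally show ?thesis .
qed

section \<open>Error probability of a single block\<close>

lemma pmf_nearest_classes_2:
  "pmf (pmf_of_set (nearest_classes a b)) 2 = (if b < a then 1 else if a < b then 0 else 1/2)"
  by (auto simp: nearest_classes_def pmf_of_set_singleton)

lemma pmf_block_vote_pmf:
  assumes "0 \<le> p" "p \<le> 1"
  shows "pmf (block_vote_pmf p L) 2
           = (\<Sum>n1\<le>L. (\<Sum>n2\<le>L. pmf (pmf_of_set (nearest_classes n1 n2)) 2 * pmf (binomial_pmf L (1/2)) n2)
                        * pmf (binomial_pmf L p) n1)"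
proof -
  have binomial_support: "set_pmf (binomial_pmf L q) \<subseteq> {..L}" if "0 \<le> q" "q \<le> 1" for q
    using that by (subst set_pmf_binomial_eq) auto
  have inner: "pmf (binomial_pmf L (1/2) \<bind> (\<lambda>n2. pmf_of_set (nearest_classes n1 n2))) 2
      = (\<Sum>n2\<le>L. pmf (pmf_of_set (nearest_classes n1 n2)) 2 * pmf (binomial_pmf L (1/2)) n2)" for n1
    unfolding pmf_bind using binomial_support[of "1/2"] by (intro integral_measure_pmf_real) auto
  show ?thesis
    unfolding block_vote_pmf_def pmf_bind[of "binomial_pmf L p"] inner
    using binomial_support[OF assms] by (intro integral_measure_pmf_real) auto
qed

lemma binomial_pmf_generating_function:
  assumes "0 \<le> p" "p \<le> 1"
  shows "(\<Sum>n\<le>L. x ^ n * pmf (binomial_pmf L p) n) = (x * p + (1 - p)) ^ L"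
proof -
  have "(x * p + (1 - p)) ^ L = (\<Sum>n\<le>L. of_nat (L choose n) * (x * p) ^ n * (1 - p) ^ (L - n))"
    by (rule binomial_ring)
  then show ?thesis using assms by (simp add: power_mult_distrib mult_ac)
qed

lemma block_vote_error_upper:
  assumes "0 < p" "p \<le> 1/2"
  shows "pmf (block_vote_pmf p L) 2 \<le> (1/2 + sqrt (p * (1 - p))) ^ L"
proof -
  have p01: "0 \<le> p" "p \<le> 1" using assms by auto
  define w where "w = sqrt (p * (1 - p))"
  \<comment> \<open>the minimiser of the Chernoff bound \<open>(x p + 1 - p) (1 / (2 x) + 1 / 2)\<close>\<close>
  define x where "x = w / p"
  have "0 < w" and w2: "w\<^sup>2 = p * (1 - p)" using assms by (simp_all add: w_def)
  have "p * p \<le> p * (1 - p)" using assms by (intro mult_left_mono) auto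
  then have "p \<le> w" unfolding w_def by (intro real_le_rsqrt) (simp add: power2_eq_square)
  then have "1 \<le> x" using assms by (simp add: x_def)
  have chernoff: "pmf (pmf_of_set (nearest_classes n1 n2)) 2 \<le> x ^ n1 * (1/x) ^ n2" for n1 n2 :: nat
  proof (cases "n2 \<le> n1")
    case True
    then have "x ^ n1 * (1/x) ^ n2 = x ^ (n1 - n2)"
      using \<open>1 \<le> x\<close> by (simp add: power_diff power_one_over field_simps)
    then show ?thesis using \<open>1 \<le> x\<close> by (simp add: pmf_nearest_classes_2 one_le_power)
  qed (use \<open>1 \<le> x\<close> in \<open>simp add: pmf_nearest_classes_2\<close>)
  have "pmf (block_vote_pmf p L) 2
      \<le> (\<Sum>n1\<le>L. (\<Sum>n2\<le>L. x ^ n1 * (1/x) ^ n2 * pmf (binomial_pmf L (1/2)) n2) * pmf (binomial_pmf L p) n1)"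
    unfolding pmf_block_vote_pmf[OF p01]
    by (intro sum_mono mult_right_mono chernoff) auto
  also have "\<dots> = (\<Sum>n1\<le>L. x ^ n1 * pmf (binomial_pmf L p) n1)
                   * (\<Sum>n2\<le>L. (1/x) ^ n2 * pmf (binomial_pmf L (1/2)) n2)"
    unfolding sum_product by (intro sum.cong refl) (simp add: sum_distrib_left mult_ac)
  also have "\<dots> = ((x * p + (1 - p)) * (1/x * (1/2) + (1 - 1/2))) ^ L"
    unfolding power_mult_distrib binomial_pmf_generating_function[OF p01]
    by (subst binomial_pmf_generating_function) auto
  also have "(x * p + (1 - p)) * (1/x * (1/2) + (1 - 1/2)) = (w\<^sup>2 + p * (1 - p) + w) / (2 * w)"
    using assms \<open>0 < w\<close> by (simp add: x_def field_simps power2_eq_square)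
  also have "\<dots> = 1/2 + w"
    using \<open>0 < w\<close> by (simp add: w2[symmetric] field_simps power2_eq_square)
  finally show ?thesis by (simp add: w_def)
qed

lemma block_vote_error_lower:
  assumes "0 \<le> p" "p \<le> 1"
  shows "(1/2 + sqrt (p * (1 - p))) ^ L / (2 * (real L + 1)) \<le> pmf (block_vote_pmf p L) 2"
proof -
  define w where "w = sqrt (p * (1 - p))"
  define a where "a n = real (L choose n) * sqrt p ^ n * sqrt (1 - p) ^ (L - n)" for n
  have sqrt_pow: "(sqrt q ^ m)\<^sup>2 = q ^ m" if "0 \<le> q" for q :: real and m :: nat
    using that by (simp add: power_even_eq[symmetric] power_mult)
  have a_sq: "(a n)\<^sup>2 = real (L choose n) * pmf (binomial_pmf L p) n" for n
    using assms by (simp add: a_def power_mult_distrib sqrt_pow power2_eq_square[of "real _"])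
  have "(\<Sum>n\<le>L. a n) = (sqrt p + sqrt (1 - p)) ^ L"
    by (simp add: a_def binomial_ring[of "sqrt p"] mult_ac)
  moreover have "(sqrt p + sqrt (1 - p))\<^sup>2 = 1 + 2 * w"
    using assms by (simp add: w_def power2_sum real_sqrt_mult)
  ultimately have "(\<Sum>n\<le>L. a n)\<^sup>2 = (1 + 2 * w) ^ L"
    by (simp flip: power_mult add: mult.commute[of L] power_mult)
  then have cauchy_schwarz: "(1 + 2 * w) ^ L / (real L + 1) \<le> (\<Sum>n\<le>L. (a n)\<^sup>2)"
    using sum_squared_le_sum_of_squares[of a "{..L}"] by (simp add: divide_le_eq add.commute)
  have "(1/2) ^ Suc L * (\<Sum>n\<le>L. (a n)\<^sup>2)
      = (\<Sum>n\<le>L. (pmf (pmf_of_set (nearest_classes n n)) 2 * pmf (binomial_pmf L (1/2)) n)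
                  * pmf (binomial_pmf L p) n)"
    unfolding sum_distrib_left
  proof (intro sum.cong refl)
    fix n assume "n \<in> {..L}"
    then have "pmf (binomial_pmf L (1/2)) n = real (L choose n) * (1/2) ^ L"
      by (simp flip: power_add)
    then show "(1/2) ^ Suc L * (a n)\<^sup>2
        = pmf (pmf_of_set (nearest_classes n n)) 2 * pmf (binomial_pmf L (1/2)) n * pmf (binomial_pmf L p) n"
      by (simp add: a_sq pmf_nearest_classes_2 del: pmf_binomial)
  qed
  also have "\<dots> \<le> pmf (block_vote_pmf p L) 2"
    unfolding pmf_block_vote_pmf[OF assms]
    by (intro sum_mono mult_right_mono member_le_sum) (auto simp: pmf_nearest_classes_2)
  finally have diagonal: "(1/2) ^ Suc L * (\<Sum>n\<le>L. (a n)\<^sup>2) \<le> pmf (block_vote_pmf p L) 2" .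
  have "(1/2 + w) ^ L / (2 * (real L + 1)) = (1/2) ^ Suc L * ((1 + 2 * w) ^ L / (real L + 1))"
    by (simp add: field_simps flip: power_mult_distrib)
  also have "\<dots> \<le> (1/2) ^ Suc L * (\<Sum>n\<le>L. (a n)\<^sup>2)"
    using cauchy_schwarz by (intro mult_left_mono) auto
  also note diagonal
  finally show ?thesis unfolding w_def .
qed

section \<open>Exponential rates\<close>

lemma rate_I_eq:
  assumes "0 < \<rho>" "\<rho> < 1"
  defines "p \<equiv> 2 * \<rho> * (1 - \<rho>)"
  shows "rate_I \<rho> = - ln (1/2 + sqrt (p * (1 - p)))"
proof -
  define w where "w = sqrt (p * (1 - p))"
  have "0 < p" "p < 1"
    using assms mismatch_prob_le_half[of \<rho>] by (simp_all add: p_def)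
  then have "0 < w" and w2: "w * w = p * (1 - p)" by (simp_all add: w_def)
  define f where "f t = \<rho> * (1 - \<rho>) * exp t + 1/2 + 1/2 * (1 - 2*\<rho> + 2*\<rho>^2) * exp (-t)" for t
  have f_eq: "f t = 1/2 + (p * exp t + (1 - p) / exp t) / 2" for t
    by (simp add: f_def p_def exp_minus field_simps power2_eq_square)
  have f_ge: "1/2 + w \<le> f t" for t
    using arith_geo_mean_sqrt[of "p * exp t" "(1 - p) / exp t"] \<open>0 < p\<close> \<open>p < 1\<close>
    by (simp add: f_eq w_def)
  have f_min: "f (ln (w / p)) = 1/2 + w"
    using \<open>0 < p\<close> \<open>0 < w\<close> w2 by (simp add: f_eq field_simps)
  have "(INF t. ln (f t)) = ln (1/2 + w)"
  proof (rule cInf_eq_minimum)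
    show "ln (1/2 + w) \<in> range (\<lambda>t. ln (f t))"
      using f_min by (metis rangeI)
    fix x assume "x \<in> range (\<lambda>t. ln (f t))"
    then obtain t where "x = ln (f t)" by auto
    then show "ln (1/2 + w) \<le> x"
      using f_ge[of t] \<open>0 < w\<close> by simp
  qed
  then show ?thesis by (simp add: rate_I_def f_def w_def)
qed

lemma block_error_base_bounds:
  fixes p :: real
  assumes "0 < p" "p < 1/2"
  shows "0 < 1/2 + sqrt (p * (1 - p))" and "1/2 + sqrt (p * (1 - p)) < 1"
proof -
  have "0 \<le> p * (1 - p)" using assms by simp
  then show "0 < 1/2 + sqrt (p * (1 - p))" by (simp add: add_pos_nonneg)
  have "sqrt (p * (1 - p)) < sqrt ((1/2)\<^sup>2)"
    using mismatch_prob_less_half[of p] assms by (simp add: power2_eq_square)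
  then show "1/2 + sqrt (p * (1 - p)) < 1" by simp
qed

lemma rate_I_pos:
  assumes "0 < \<rho>" "\<rho> < 1/2"
  shows "0 < rate_I \<rho>"
proof -
  define p where "p = 2 * \<rho> * (1 - \<rho>)"
  have "0 < p" "p < 1/2"
    using assms mismatch_prob_less_half[of \<rho>] by (simp_all add: p_def)
  then show ?thesis
    using block_error_base_bounds[of p] assms by (simp add: rate_I_eq p_def)
qed

lemma binomial_majority_bounds:
  assumes "0 \<le> q" "q \<le> 1" "odd c"
  defines "h \<equiv> (c + 1) div 2"
  shows "q ^ h * (1 - q) ^ (c - h) \<le> measure_pmf.prob (binomial_pmf c q) {k. c < 2 * k}"
    and "measure_pmf.prob (binomial_pmf c q) {k. c < 2 * k} \<le> 2 ^ c * q ^ h"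
proof -
  let ?B = "binomial_pmf c q" and ?K = "{k. c < 2 * k \<and> k \<le> c}"
  have majority: "k \<in> ?K \<longleftrightarrow> h \<le> k \<and> k \<le> c" for k
    using \<open>odd c\<close> by (auto simp: h_def elim!: oddE)
  have "set_pmf ?B \<subseteq> {..c}" using assms by (subst set_pmf_binomial_eq) auto
  then have "measure_pmf.prob ?B {k. c < 2 * k} = measure_pmf.prob ?B ?K"
    by (intro measure_prob_cong_0) (auto simp: set_pmf_eq)
  also have "\<dots> = (\<Sum>k\<in>?K. pmf ?B k)"
    by (rule measure_measure_pmf_finite) auto
  finally have tail: "measure_pmf.prob ?B {k. c < 2 * k} = (\<Sum>k\<in>?K. pmf ?B k)" .
  have "h \<le> c" using \<open>odd c\<close> by (auto simp: h_def elim!: oddE)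
  then have "0 < c choose h" by (rule zero_less_binomial)
  then have "1 \<le> real (c choose h)" by (simp add: Suc_leI)
  then have "q ^ h * (1 - q) ^ (c - h) \<le> real (c choose h) * q ^ h * (1 - q) ^ (c - h)"
    using mult_right_mono[of 1 "real (c choose h)" "q ^ h * (1 - q) ^ (c - h)"] assms
    by (simp add: mult.assoc)
  also have "\<dots> = pmf ?B h" using assms by simp
  also have "\<dots> \<le> (\<Sum>k\<in>?K. pmf ?B k)"
    using majority[of h] \<open>h \<le> c\<close> by (intro member_le_sum) auto
  finally show "q ^ h * (1 - q) ^ (c - h) \<le> measure_pmf.prob ?B {k. c < 2 * k}"
    unfolding tail .
  have "(\<Sum>k\<in>?K. pmf ?B k) \<le> (\<Sum>k\<in>?K. real (c choose k) * q ^ h)"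
  proof (intro sum_mono)
    fix k assume "k \<in> ?K"
    then have "q ^ k * (1 - q) ^ (c - k) \<le> q ^ h * 1"
      using assms majority by (intro mult_mono power_decreasing power_le_one) auto
    then show "pmf ?B k \<le> real (c choose k) * q ^ h"
      using assms by (simp add: mult.assoc mult_left_mono)
  qed
  also have "\<dots> \<le> (\<Sum>k\<le>c. real (c choose k) * q ^ h)"
    using assms by (intro sum_mono2) auto
  also have "\<dots> = 2 ^ c * q ^ h"
    by (simp flip: sum_distrib_right of_nat_sum add: choose_row_sum)
  finally show "measure_pmf.prob ?B {k. c < 2 * k} \<le> 2 ^ c * q ^ h"
    unfolding tail .
qed

lemma ln_power_sandwich:
  fixes r q :: real
  assumes r: "0 < r" "r < 1" and "1 \<le> L"
    and q: "r ^ L / (2 * (real L + 1)) \<le> q" "q \<le> r ^ L"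
  shows "0 < q" and "q < 1"
    and "real L * ln r - ln (2 * (real L + 1)) \<le> ln q" and "ln q \<le> real L * ln r"
    and "ln (1 - r) \<le> ln (1 - q)"
proof -
  have "0 < r ^ L / (2 * (real L + 1))" using r by simp
  then show "0 < q" using q(1) by linarith
  have "r ^ L \<le> r" using r \<open>1 \<le> L\<close> by (metis power_decreasing power_one_right less_imp_le)
  then show "q < 1" using q(2) r by linarith
  have "real L * ln r - ln (2 * (real L + 1)) = ln (r ^ L / (2 * (real L + 1)))"
    using r by (simp add: ln_div ln_realpow)
  also have "\<dots> \<le> ln q"
    using q(1) \<open>0 < r ^ L / (2 * (real L + 1))\<close> by (subst ln_le_cancel_iff) auto
  finally show "real L * ln r - ln (2 * (real L + 1)) \<le> ln q" .
  show "ln q \<le> real L * ln r"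
    using q(2) \<open>0 < q\<close> r by (simp add: ln_realpow[symmetric])
  show "ln (1 - r) \<le> ln (1 - q)"
    using q(2) \<open>r ^ L \<le> r\<close> r by (subst ln_le_cancel_iff) auto
qed

lemma ln_majority_error_bounds:
  fixes c L :: nat and r q :: real
  assumes r: "0 < r" "r < 1" and "odd c" "1 \<le> L"
    and q: "r ^ L / (2 * (real L + 1)) \<le> q" "q \<le> r ^ L"
  defines "E \<equiv> measure_pmf.prob (binomial_pmf c q) {k. c < 2 * k}"
  shows "(1 + inverse c) / 2 * (ln r - ln (2 * (real L + 1)) * inverse L)
           + (1 - inverse c) / 2 * (ln (1 - r) * inverse L) \<le> ln E / real (c * L)"
    and "ln E / real (c * L) \<le> ln 2 * inverse L + (1 + inverse c) / 2 * ln r"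
proof -
  define h where "h = (c + 1) div 2"
  have "1 \<le> c" using \<open>odd c\<close> by (cases c) auto
  have h: "real h = (real c + 1) / 2" and ch: "real (c - h) = (real c - 1) / 2"
    using \<open>odd c\<close> by (auto simp: h_def of_nat_diff elim!: oddE)
  note q_bounds = ln_power_sandwich[OF r \<open>1 \<le> L\<close> q]
  have "0 < q" "q < 1" using q_bounds(1,2) .
  have E: "q ^ h * (1 - q) ^ (c - h) \<le> E" "E \<le> 2 ^ c * q ^ h"
    using binomial_majority_bounds[of q c] \<open>0 < q\<close> \<open>q < 1\<close> \<open>odd c\<close> by (simp_all add: E_def h_def)
  have "0 < q ^ h * (1 - q) ^ (c - h)" using \<open>0 < q\<close> \<open>q < 1\<close> by simp
  then have "0 < E" using E(1) by linarith
  have "0 < real (c * L)" using \<open>1 \<le> c\<close> \<open>1 \<le> L\<close> by simp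
  have "real h * (real L * ln r - ln (2 * (real L + 1))) + real (c - h) * ln (1 - r)
          \<le> real h * ln q + real (c - h) * ln (1 - q)"
    using q_bounds(3,5) by (intro add_mono mult_left_mono) auto
  also have "\<dots> = ln (q ^ h * (1 - q) ^ (c - h))"
    using \<open>0 < q\<close> \<open>q < 1\<close> by (simp add: ln_mult ln_realpow)
  also have "\<dots> \<le> ln E" using E(1) \<open>0 < q ^ h * (1 - q) ^ (c - h)\<close> by simp
  finally have lower: "real h * (real L * ln r - ln (2 * (real L + 1))) + real (c - h) * ln (1 - r)
                         \<le> ln E" .
  have "(1 + inverse c) / 2 * (ln r - ln (2 * (real L + 1)) * inverse L)
          + (1 - inverse c) / 2 * (ln (1 - r) * inverse L)
      = (real h * (real L * ln r - ln (2 * (real L + 1))) + real (c - h) * ln (1 - r)) / real (c * L)"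
    using \<open>1 \<le> c\<close> \<open>1 \<le> L\<close> unfolding h ch by (simp add: field_simps)
  also have "\<dots> \<le> ln E / real (c * L)"
    using lower \<open>0 < real (c * L)\<close> by (rule divide_right_mono[OF _ less_imp_le])
  finally show "(1 + inverse c) / 2 * (ln r - ln (2 * (real L + 1)) * inverse L)
           + (1 - inverse c) / 2 * (ln (1 - r) * inverse L) \<le> ln E / real (c * L)" .
  have "ln E \<le> ln (2 ^ c * q ^ h)" using E(2) \<open>0 < E\<close> by simp
  also have "\<dots> = real c * ln 2 + real h * ln q" using \<open>0 < q\<close> by (simp add: ln_mult ln_realpow)
  also have "\<dots> \<le> real c * ln 2 + real h * (real L * ln r)"
    using q_bounds(4) by (intro add_left_mono mult_left_mono) auto
  finally have "ln E / real (c * L) \<le> (real c * ln 2 + real h * (real L * ln r)) / real (c * L)"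
    using \<open>0 < real (c * L)\<close> by (rule divide_right_mono[OF _ less_imp_le])
  also have "\<dots> = ln 2 * inverse L + (1 + inverse c) / 2 * ln r"
    using \<open>1 \<le> c\<close> \<open>1 \<le> L\<close> unfolding h by (simp add: field_simps)
  finally show "ln E / real (c * L) \<le> ln 2 * inverse L + (1 + inverse c) / 2 * ln r" .
qed

lemma majority_error_exponent:
  fixes c L :: "nat \<Rightarrow> nat" and q :: "nat \<Rightarrow> real"
  assumes r: "0 < r" "r < 1" and c: "\<And>n. odd (c n)" and L: "\<And>n. 1 \<le> L n"
    and q: "\<And>n. r ^ L n / (2 * (real (L n) + 1)) \<le> q n" "\<And>n. q n \<le> r ^ L n"
    and L_lim: "filterlim (\<lambda>n. real (L n)) at_top sequentially"
    and c_lim: "(\<lambda>n. inverse (real (c n))) \<longlonglongrightarrow> \<gamma>"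
  shows "(\<lambda>n. ln (measure_pmf.prob (binomial_pmf (c n) (q n)) {k. c n < 2 * k}) / real (c n * L n))
           \<longlonglongrightarrow> (1 + \<gamma>) / 2 * ln r"
proof (rule tendsto_sandwich[OF always_eventually always_eventually])
  have "((\<lambda>x::real. ln (2 * (x + 1)) * inverse x) \<longlongrightarrow> 0) at_top"
    by real_asymp
  then have "(\<lambda>n. ln (2 * (real (L n) + 1)) * inverse (real (L n))) \<longlonglongrightarrow> 0"
    using L_lim by (rule filterlim_compose)
  moreover have L_inv: "(\<lambda>n. inverse (real (L n))) \<longlonglongrightarrow> 0"
    using L_lim by (rule tendsto_inverse_0_at_top)
  ultimately have "(\<lambda>n. (1 + inverse (c n)) / 2 * (ln r - ln (2 * (real (L n) + 1)) * inverse (L n))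
                     + (1 - inverse (c n)) / 2 * (ln (1 - r) * inverse (L n)))
                   \<longlonglongrightarrow> (1 + \<gamma>) / 2 * (ln r - 0) + (1 - \<gamma>) / 2 * (ln (1 - r) * 0)"
    by (intro tendsto_intros c_lim) simp_all
  then show "(\<lambda>n. (1 + inverse (c n)) / 2 * (ln r - ln (2 * (real (L n) + 1)) * inverse (L n))
                     + (1 - inverse (c n)) / 2 * (ln (1 - r) * inverse (L n))) \<longlonglongrightarrow> (1 + \<gamma>) / 2 * ln r"
    by simp
  have "(\<lambda>n. ln 2 * inverse (L n) + (1 + inverse (c n)) / 2 * ln r) \<longlonglongrightarrow> ln 2 * 0 + (1 + \<gamma>) / 2 * ln r"
    by (intro tendsto_intros c_lim L_inv) simp_all
  then show "(\<lambda>n. ln 2 * inverse (L n) + (1 + inverse (c n)) / 2 * ln r) \<longlonglongrightarrow> (1 + \<gamma>) / 2 * ln r"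
    by simp
qed (use ln_majority_error_bounds[OF r c L q] in auto)

lemma modelA_err_exponent:
  fixes cs ds :: "nat \<Rightarrow> nat"
  assumes "0 < \<rho>" "\<rho> < 1/2"
    and "\<And>n. cs n dvd ds n" "\<And>n. odd (cs n)" "\<And>n. 0 < ds n"
    and L_lim: "filterlim (\<lambda>n. real (ds n div cs n)) at_top sequentially"
    and c_lim: "(\<lambda>n. inverse (real (cs n))) \<longlonglongrightarrow> \<gamma>"
  shows "(\<lambda>n. ln (modelA_err \<rho> (ds n) (cs n)) / real (ds n)) \<longlonglongrightarrow> - (1 + \<gamma>) / 2 * rate_I \<rho>"
proof -
  define p where "p = 2 * \<rho> * (1 - \<rho>)"
  define r where "r = 1/2 + sqrt (p * (1 - p))"
  have "0 < p" "p < 1/2"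
    using assms(1,2) mismatch_prob_less_half[of \<rho>] by (simp_all add: p_def)
  then have "0 < r" "r < 1"
    unfolding r_def by (rule block_error_base_bounds)+
  have "rate_I \<rho> = - ln r"
    using assms(1,2) by (simp add: rate_I_eq r_def p_def)
  then have rate: "- (1 + \<gamma>) / 2 * rate_I \<rho> = (1 + \<gamma>) / 2 * ln r"
    by (simp add: algebra_simps)
  have ds: "ds n = cs n * (ds n div cs n)" for n
    using assms(3)[of n] by simp
  have "1 \<le> ds n div cs n" for n
    using ds[of n] assms(5)[of n] by (cases "ds n div cs n") auto
  have "(\<lambda>n. ln (measure_pmf.prob (binomial_pmf (cs n) (pmf (block_vote_pmf p (ds n div cs n)) 2))
                   {k. cs n < 2 * k}) / real (cs n * (ds n div cs n)))
          \<longlonglongrightarrow> (1 + \<gamma>) / 2 * ln r"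
    using block_vote_error_lower[of p] block_vote_error_upper[of p] \<open>0 < p\<close> \<open>p < 1/2\<close>
    by (intro majority_error_exponent[OF \<open>0 < r\<close> \<open>r < 1\<close> assms(4)] \<open>1 \<le> ds _ div cs _\<close> L_lim c_lim)
       (simp_all add: r_def)
  moreover have "modelA_err \<rho> (ds n) (cs n)
      = measure_pmf.prob (binomial_pmf (cs n) (pmf (block_vote_pmf p (ds n div cs n)) 2)) {k. cs n < 2 * k}" for n
    using assms(1-5) unfolding p_def by (intro modelA_err_majority) auto
  ultimately show ?thesis
    unfolding rate by (simp flip: ds)
qed

theorem proposition1:
  fixes \<rho> :: real
  assumes "0 < \<rho>" and "\<rho> < 1/2"
  shows "0 < rate_I \<rho>
    \<and> (\<lambda>n. ln (modelA_err \<rho> (2*n+1) 1) / real (2*n+1)) \<longlonglongrightarrow> - rate_I \<rho>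
    \<and> (\<forall>ds cs :: nat \<Rightarrow> nat.
          (\<forall>n. cs n dvd ds n \<and> odd (cs n) \<and> odd (ds n div cs n))
          \<and> filterlim ds at_top sequentially
          \<and> filterlim cs at_top sequentially
          \<and> (\<lambda>n. real (cs n) / real (ds n)) \<longlonglongrightarrow> 0
          \<longrightarrow> (\<lambda>n. ln (modelA_err \<rho> (ds n) (cs n)) / real (ds n)) \<longlonglongrightarrow> - rate_I \<rho> / 2)"
proof (intro conjI allI impI)
  show "0 < rate_I \<rho>" using assms by (rule rate_I_pos)
  have "filterlim (\<lambda>n. real (2 * n + 1)) at_top sequentially" by real_asymp
  then show "(\<lambda>n. ln (modelA_err \<rho> (2*n+1) 1) / real (2*n+1)) \<longlonglongrightarrow> - rate_I \<rho>"
    using modelA_err_exponent[OF assms, of "\<lambda>_. 1" "\<lambda>n. 2 * n + 1" 1] by simp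
next
  fix ds cs :: "nat \<Rightarrow> nat"
  assume h: "(\<forall>n. cs n dvd ds n \<and> odd (cs n) \<and> odd (ds n div cs n))
          \<and> filterlim ds at_top sequentially \<and> filterlim cs at_top sequentially
          \<and> (\<lambda>n. real (cs n) / real (ds n)) \<longlonglongrightarrow> 0"
  have "0 < ds n" for n
    using h by (metis div_0 dvd_0_right gr0I)
  moreover have "0 < cs n" for n
    using h by (metis odd_pos)
  ultimately have pos: "0 < real (cs n) / real (ds n)" for n
    by simp
  have L: "real (ds n div cs n) = inverse (real (cs n) / real (ds n))" for n
    using h by (auto simp: real_of_nat_div elim!: dvdE oddE)
  have "filterlim (\<lambda>n. real (ds n div cs n)) at_top sequentially"
    unfolding L using h pos by (intro filterlim_inverse_at_top[unfolded o_def]) auto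
  moreover have "(\<lambda>n. inverse (real (cs n))) \<longlonglongrightarrow> 0"
    using h by (intro tendsto_inverse_0_at_top filterlim_compose[OF filterlim_real_sequentially]) auto
  ultimately show "(\<lambda>n. ln (modelA_err \<rho> (ds n) (cs n)) / real (ds n)) \<longlonglongrightarrow> - rate_I \<rho> / 2"
    using modelA_err_exponent[OF assms, of cs ds 0] h \<open>0 < ds _\<close> by simp
qed

end
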